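(* Assume there are constants $\gamma_t\ge 0$ ($t=0,\dots,T-1$) with $|C_t(x)-C_t(y)|\le\gamma_t|x-y|$ for all $x,y$. Then for every $t=0,1,\dots,T-1$ and all $x'\le x$: $H_t(x)-H_t(x')\le\psi_t(x-x',x)$ and $V_t(x)-V_t(x')\le\varphi_t(x-x',x)$.
   Context: Model. Fix an integer horizon $T\ge 2$, a discount factor $\alpha\in(0,1]$, and for $t=0,\dots,T-1$: unit ordering costs $c_t\in\mathbb R$, a salvage coefficient $c_T\in\mathbb R$, setup costs $K_t\ge 0$, functions $G_t:\mathbb R\to\mathbb R$, and independent nonnegative random demands $D_0,\dots,D_{T-1}$ with right-continuous distribution functions $F_t$ and finite means; all expectations appearing are assumed finite. Put $C_t(y)=(c_t-\alpha c_{t+1})y+G_t(y)+\alpha c_{t+1}E[D_t]$. Standing assumptions: (i) each $C_t$ is convex with $C_t(y)\to+\infty$ as $|y|\to\infty$; (ii) $K_t\ge \alpha K_{t+1}$ for $t=0,\dots,T-2$. Grid construction. Fix $\theta>0$, $z_m=m\theta$, $Z_\theta=\{z_m:m\in\mathbb Z\}$, $f_t(n)=F_t(z_{n+1})-F_t(z_n)$ ($n\ge -1$). $C^m_t=\min\{y: C_t(y)=\min_x C_t(x)\}$; with $z_{n_0}<C^m_t\le z_{n_0+1}$, $S^U_t=\min\{z_m\in Z_\theta: z_m\ge C^m_t,\ C_t(z_m)>C_t(z_{n_0})+K_t\}$. $s_{T-1}$ is a point with $s_{T-1}\le C^m_{T-1}$, $C_{T-1}(s_{T-1})=C_{T-1}(C^m_{T-1})+K_{T-1}$;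 $\bar I_{T-1}=s_{T-1}$. For $t=T-2,\dots,0$: $I_t=\max\{z_m\in Z_\theta: z_m<\min(\bar I_{t+1}-\theta,C^m_t)\}$, $\bar I_t=\max\{z_m\in Z_\theta: z_m\le I_t,\ C_t(z_m)>C_t(I_t)+K_t\}+\theta$. $H_{T-1}=C_{T-1}$, $S_{T-1}=C^m_{T-1}$; $V_t(y)=H_t(S_t)+K_t$ for $y<s_t$, $V_t(y)=H_t(y)$ for $y\ge s_t$. For $t=T-2,\dots,0$: $H_t(y)=C_t(y)+\alpha\sum_{n=-1}^\infty V_{t+1}(y-z_n)f_t(n)$; $S_t=\max\{z_m\in Z_\theta: I_t\le z_m\le S^U_t,\ H_t(z_m)=\min\{H_t(z_n):z_n\in Z_\theta, I_t\le z_n\le S^U_t\}\}$; $s_t=S_t$ if $K_t=0$, else $s_t=\min\{z_m\in Z_\theta:\bar I_t\le z_m\le S_t,\ H_t(z_m)\le H_t(S_t)+K_t\}$. Estimate functions. $\psi_{T-1}(x,y)=\gamma_{T-1}x$ for all $x,y$; $\varphi_{T-1}(x,y)=0$ if $y<s_{T-1}$ and $\varphi_{T-1}(x,y)=\gamma_{T-1}x$ if $y\ge s_{T-1}$. For $t=0,\dots,T-2$: $\psi_t(x,y)=\gamma_tx$ if $y<s_{t+1}-\theta$, and otherwise $\psi_t(x,y)=\gamma_tx+\alpha\sum_{m=-1}^{n-1}\varphi_{t+1}(x,y-z_m)f_t(m)$, where $n$ is the integer with $z_{n-1}\le y-s_{t+1}<z_n$; and $\varphi_t(x,y)=0$ if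 $y<s_t$, $\varphi_t(x,y)=\psi_t(y-s_t,y)$ if $y\ge s_t$ and $y-x<s_t$, $\varphi_t(x,y)=\psi_t(x,y)$ if $y\ge s_t$ and $y-x\ge s_t$. *)

theory Defs
  imports "HOL-Probability.Probability"
begin

text \<open>Demand of period t has distribution M t (a probability measure on the reals);
  its distribution function is cdf (M t) and its mean is the Lebesgue integral.\<close>

definition Ccost :: "real \<Rightarrow> (nat \<Rightarrow> real) \<Rightarrow> (nat \<Rightarrow> real \<Rightarrow> real) \<Rightarrow> (nat \<Rightarrow> real measure)
    \<Rightarrow> nat \<Rightarrow> real \<Rightarrow> real" where
  "Ccost \<alpha> c G M t y = (c t - \<alpha> * c (Suc t)) * y + G t y + \<alpha> * c (Suc t) * (\<integral>d. d \<partial>M t)"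

definition Cm :: "(nat \<Rightarrow> real \<Rightarrow> real) \<Rightarrow> nat \<Rightarrow> real" where
  "Cm C t = Inf {y. \<forall>x. C t y \<le> C t x}"

definition zg :: "real \<Rightarrow> int \<Rightarrow> real" where
  "zg \<theta> m = of_int m * \<theta>"

definition grid :: "real \<Rightarrow> real set" where
  "grid \<theta> = range (zg \<theta>)"

definition n0 :: "(nat \<Rightarrow> real \<Rightarrow> real) \<Rightarrow> real \<Rightarrow> nat \<Rightarrow> int" where
  "n0 C \<theta> t = (THE n::int. zg \<theta> n < Cm C t \<and> Cm C t \<le> zg \<theta> (n + 1))"

definition SU :: "(nat \<Rightarrow> real \<Rightarrow> real) \<Rightarrow> (nat \<Rightarrow> real) \<Rightarrow> real \<Rightarrow> nat \<Rightarrow> real" where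
  "SU C K \<theta> t = Inf {z \<in> grid \<theta>. Cm C t \<le> z \<and> C t z > C t (zg \<theta> (n0 C \<theta> t)) + K t}"

definition sLast :: "(nat \<Rightarrow> real \<Rightarrow> real) \<Rightarrow> (nat \<Rightarrow> real) \<Rightarrow> nat \<Rightarrow> real" where
  "sLast C K T = (SOME s. s \<le> Cm C (T - 1) \<and> C (T - 1) s = C (T - 1) (Cm C (T - 1)) + K (T - 1))"

definition fprob :: "real \<Rightarrow> (nat \<Rightarrow> real \<Rightarrow> real) \<Rightarrow> nat \<Rightarrow> int \<Rightarrow> real" where
  "fprob \<theta> F t n = F t (zg \<theta> (n + 1)) - F t (zg \<theta> n)"

definition Vof :: "(real \<Rightarrow> real) \<Rightarrow> real \<Rightarrow> real \<Rightarrow> real \<Rightarrow> real \<Rightarrow> real" where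
  "Vof H S s Kt y = (if y < s then H S + Kt else H y)"

text \<open>A stage is the tuple (H_t, S_t, s_t, Ibar_t).\<close>
type_synonym stage = "(real \<Rightarrow> real) \<times> real \<times> real \<times> real"

definition step :: "(nat \<Rightarrow> real \<Rightarrow> real) \<Rightarrow> (nat \<Rightarrow> real) \<Rightarrow> real \<Rightarrow> real
    \<Rightarrow> (nat \<Rightarrow> real \<Rightarrow> real) \<Rightarrow> nat \<Rightarrow> stage \<Rightarrow> stage" where
  "step C K \<alpha> \<theta> F t st =
    (let (H', S', s', Ib') = st;
         I = Sup {z \<in> grid \<theta>. z < min (Ib' - \<theta>) (Cm C t)};
         Ib = Sup {z \<in> grid \<theta>. z \<le> I \<and> C t z > C t I + K t} + \<theta>;
         H = (\<lambda>y. C t y + \<alpha> * (\<Sum>k. Vof H' S' s' (K (Suc t)) (y - zg \<theta> (int k - 1))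
                                     * fprob \<theta> F t (int k - 1)));
         R = {z \<in> grid \<theta>. I \<le> z \<and> z \<le> SU C K \<theta> t};
         S = Sup {z \<in> R. H z = Inf (H ` R)};
         s = (if K t = 0 then S
              else Inf {z \<in> grid \<theta>. Ib \<le> z \<and> z \<le> S \<and> H z \<le> H S + K t})
     in (H, S, s, Ib))"

text \<open>stages ... k is the stage of period t = T - 1 - k.\<close>
primrec stages :: "(nat \<Rightarrow> real \<Rightarrow> real) \<Rightarrow> (nat \<Rightarrow> real) \<Rightarrow> real \<Rightarrow> real
    \<Rightarrow> (nat \<Rightarrow> real \<Rightarrow> real) \<Rightarrow> nat \<Rightarrow> nat \<Rightarrow> stage" where
  "stages C K \<alpha> \<theta> F T 0 = (C (T - 1), Cm C (T - 1), sLast C K T, sLast C K T)"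
| "stages C K \<alpha> \<theta> F T (Suc k) = step C K \<alpha> \<theta> F (T - 2 - k) (stages C K \<alpha> \<theta> F T k)"

definition Hfun where "Hfun C K \<alpha> \<theta> F T t = fst (stages C K \<alpha> \<theta> F T (T - 1 - t))"
definition Sfun where "Sfun C K \<alpha> \<theta> F T t = fst (snd (stages C K \<alpha> \<theta> F T (T - 1 - t)))"
definition sfun where "sfun C K \<alpha> \<theta> F T t = fst (snd (snd (stages C K \<alpha> \<theta> F T (T - 1 - t))))"
definition Vfun :: "(nat \<Rightarrow> real \<Rightarrow> real) \<Rightarrow> (nat \<Rightarrow> real) \<Rightarrow> real \<Rightarrow> real
    \<Rightarrow> (nat \<Rightarrow> real \<Rightarrow> real) \<Rightarrow> nat \<Rightarrow> nat \<Rightarrow> real \<Rightarrow> real" where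
  "Vfun C K \<alpha> \<theta> F T t y =
     Vof (Hfun C K \<alpha> \<theta> F T t) (Sfun C K \<alpha> \<theta> F T t) (sfun C K \<alpha> \<theta> F T t) (K t) y"

definition psi_step :: "(nat \<Rightarrow> real) \<Rightarrow> real \<Rightarrow> real \<Rightarrow> (nat \<Rightarrow> real \<Rightarrow> real) \<Rightarrow> real \<Rightarrow> nat
    \<Rightarrow> (real \<Rightarrow> real \<Rightarrow> real) \<Rightarrow> real \<Rightarrow> real \<Rightarrow> real" where
  "psi_step \<gamma> \<alpha> \<theta> F s' t phi' x y =
    (if y < s' - \<theta> then \<gamma> t * x
     else (let n = (THE n::int. zg \<theta> (n - 1) \<le> y - s' \<and> y - s' < zg \<theta> n)
           in \<gamma> t * x + \<alpha> * (\<Sum>m\<in>{-1..n - 1}. phi' x (y - zg \<theta> m) * fprob \<theta> F t m)))"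

definition phi_of :: "real \<Rightarrow> (real \<Rightarrow> real \<Rightarrow> real) \<Rightarrow> real \<Rightarrow> real \<Rightarrow> real" where
  "phi_of st ps x y = (if y < st then 0 else if y - x < st then ps (y - st) y else ps x y)"

text \<open>phis ... k is phi_t for t = T - 1 - k.\<close>
primrec phis :: "(nat \<Rightarrow> real \<Rightarrow> real) \<Rightarrow> (nat \<Rightarrow> real) \<Rightarrow> real \<Rightarrow> real
    \<Rightarrow> (nat \<Rightarrow> real \<Rightarrow> real) \<Rightarrow> nat \<Rightarrow> (nat \<Rightarrow> real) \<Rightarrow> nat \<Rightarrow> real \<Rightarrow> real \<Rightarrow> real" where
  "phis C K \<alpha> \<theta> F T \<gamma> 0 =
     (\<lambda>x y. if y < sfun C K \<alpha> \<theta> F T (T - 1) then 0 else \<gamma> (T - 1) * x)"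
| "phis C K \<alpha> \<theta> F T \<gamma> (Suc k) =
     phi_of (sfun C K \<alpha> \<theta> F T (T - 2 - k))
       (psi_step \<gamma> \<alpha> \<theta> F (sfun C K \<alpha> \<theta> F T (T - 1 - k)) (T - 2 - k) (phis C K \<alpha> \<theta> F T \<gamma> k))"

definition phifun where
  "phifun C K \<alpha> \<theta> F T \<gamma> t = phis C K \<alpha> \<theta> F T \<gamma> (T - 1 - t)"

definition psifun :: "(nat \<Rightarrow> real \<Rightarrow> real) \<Rightarrow> (nat \<Rightarrow> real) \<Rightarrow> real \<Rightarrow> real
    \<Rightarrow> (nat \<Rightarrow> real \<Rightarrow> real) \<Rightarrow> nat \<Rightarrow> (nat \<Rightarrow> real) \<Rightarrow> nat \<Rightarrow> real \<Rightarrow> real \<Rightarrow> real" where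
  "psifun C K \<alpha> \<theta> F T \<gamma> t =
     (if t = T - 1 then (\<lambda>x y. \<gamma> (T - 1) * x)
      else psi_step \<gamma> \<alpha> \<theta> F (sfun C K \<alpha> \<theta> F T (Suc t)) t (phifun C K \<alpha> \<theta> F T \<gamma> (Suc t)))"

end

theory Submission
  imports Defs
begin

text \<open>Backward induction over the periods. In the last period H is C, so its increments are
  bounded by the Lipschitz constant. In an earlier period the increment of H is the increment of
  C plus the discounted expected increment of the next value function V, which by induction is
  bounded by the next phi; as that phi vanishes below the next reorder point, the expectation is
  the finite sum defining psi. The bound for V follows from the one for H by distinguishing
  whether x and x' lie below the reorder point s, using H(s) \<le> H(S) + K.\<close>

section \<open>Grid points\<close>

lemma grid_iff: "z \<in> grid \<theta> \<longleftrightarrow> (\<exists>m. z = of_int m * \<theta>)"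
  by (auto simp: grid_def zg_def)

lemma finite_grid_interval:
  assumes "0 < \<theta>"
  shows "finite {z \<in> grid \<theta>. a \<le> z \<and> z \<le> b}"
proof -
  have "{z \<in> grid \<theta>. a \<le> z \<and> z \<le> b} \<subseteq> zg \<theta> ` {\<lceil>a/\<theta>\<rceil>..\<lfloor>b/\<theta>\<rfloor>}"
  proof
    fix z assume z: "z \<in> {z \<in> grid \<theta>. a \<le> z \<and> z \<le> b}"
    then obtain m where m: "z = of_int m * \<theta>" by (auto simp: grid_iff)
    have "a / \<theta> \<le> of_int m" "of_int m \<le> b / \<theta>"
      using z m assms by (simp_all add: pos_divide_le_eq pos_le_divide_eq)
    then have "m \<in> {\<lceil>a/\<theta>\<rceil>..\<lfloor>b/\<theta>\<rfloor>}" by (simp add: ceiling_le_iff le_floor_iff)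
    then show "z \<in> zg \<theta> ` {\<lceil>a/\<theta>\<rceil>..\<lfloor>b/\<theta>\<rfloor>}" using m by (auto simp: zg_def)
  qed
  then show ?thesis by (rule finite_subset) simp
qed

lemma grid_point_below:
  assumes "0 < \<theta>" obtains z where "z \<in> grid \<theta>" "z \<le> a"
proof
  show "of_int \<lfloor>a/\<theta>\<rfloor> * \<theta> \<in> grid \<theta>" by (auto simp: grid_iff)
  show "of_int \<lfloor>a/\<theta>\<rfloor> * \<theta> \<le> a" using assms by (simp add: pos_le_divide_eq[symmetric])
qed

lemma grid_point_above:
  assumes "0 < \<theta>" obtains z where "z \<in> grid \<theta>" "a \<le> z"
proof
  show "of_int \<lceil>a/\<theta>\<rceil> * \<theta> \<in> grid \<theta>" by (auto simp: grid_iff)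
  show "a \<le> of_int \<lceil>a/\<theta>\<rceil> * \<theta>" using assms by (simp add: pos_divide_le_eq[symmetric])
qed

lemma grid_less_imp_le_diff:
  assumes "0 < \<theta>" "z \<in> grid \<theta>" "w \<in> grid \<theta>" "z < w"
  shows "z \<le> w - \<theta>"
proof -
  obtain m k where mk: "z = of_int m * \<theta>" "w = of_int k * \<theta>" using assms by (auto simp: grid_iff)
  then have "m \<le> k - 1" using assms by (simp add: mult_less_cancel_right)
  then have "of_int m * \<theta> \<le> of_int (k - 1) * \<theta>" using assms by (simp add: mult_right_mono)
  then show ?thesis using mk by (simp add: algebra_simps)
qed

lemma grid_Sup_in:
  assumes "0 < \<theta>" "P \<subseteq> grid \<theta>" "p \<in> P" "\<forall>z\<in>P. z \<le> b"
  shows "Sup P \<in> P"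
proof -
  let ?Q = "{z \<in> P. p \<le> z}"
  have fin: "finite ?Q"
    by (rule finite_subset[OF _ finite_grid_interval[OF assms(1), of p b]]) (use assms in auto)
  have mem: "Max ?Q \<in> P" using Max_in[OF fin] assms(3) by auto
  have "\<forall>x\<in>P. x \<le> Max ?Q"
    using Max_ge[OF fin] assms(3) by (metis (no_types, lifting) mem_Collect_eq nle_le order_trans)
  then have "Sup P = Max ?Q" using cSup_eq_maximum[OF mem] by blast
  then show ?thesis using mem by simp
qed

lemma finite_cSup_in:
  fixes A :: "'a::conditionally_complete_linorder set"
  assumes "finite A" "A \<noteq> {}"
  shows "Sup A \<in> A"
  using assms by (simp add: cSup_eq_Max)

lemma finite_cInf_in:
  fixes A :: "'a::conditionally_complete_linorder set"
  assumes "finite A" "A \<noteq> {}"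
  shows "Inf A \<in> A"
  using assms by (simp add: cInf_eq_Min)

section \<open>The reorder point of a recursion step\<close>

lemma Sup_grid_less:
  assumes "0 < \<theta>"
  shows "Sup {z \<in> grid \<theta>. z < a} \<in> grid \<theta> \<and> Sup {z \<in> grid \<theta>. z < a} < a"
proof -
  obtain p where "p \<in> grid \<theta>" "p \<le> a - 1" using grid_point_below[OF assms] by metis
  then have "Sup {z \<in> grid \<theta>. z < a} \<in> {z \<in> grid \<theta>. z < a}"
    by (intro grid_Sup_in[OF assms, of _ p a]) auto
  then show ?thesis by simp
qed

lemma Cm_le_SU:
  assumes "0 < \<theta>" and "filterlim (C t) at_top at_top"
  shows "Cm C t \<le> SU C K \<theta> t"
proof -
  have "eventually (\<lambda>z. C t (zg \<theta> (n0 C \<theta> t)) + K t < C t z) at_top"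
    using assms(2) by (simp add: filterlim_at_top_dense)
  then obtain b where b: "\<forall>z\<ge>b. C t (zg \<theta> (n0 C \<theta> t)) + K t < C t z"
    by (auto simp: eventually_at_top_linorder)
  obtain q where "q \<in> grid \<theta>" "max b (Cm C t) \<le> q" using grid_point_above[OF assms(1)] by metis
  then have "q \<in> {z \<in> grid \<theta>. Cm C t \<le> z \<and> C t z > C t (zg \<theta> (n0 C \<theta> t)) + K t}"
    using b by auto
  then show ?thesis unfolding SU_def by (intro cInf_greatest) auto
qed

lemma Sup_grid_exceeding_lt:
  fixes f :: "real \<Rightarrow> real"
  assumes "0 < \<theta>" "0 \<le> k" "filterlim f at_top at_bot" "I \<in> grid \<theta>"
  shows "Sup {z \<in> grid \<theta>. z \<le> I \<and> f z > f I + k} + \<theta> \<le> I"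
proof -
  let ?W = "{z \<in> grid \<theta>. z \<le> I \<and> f z > f I + k}"
  have "eventually (\<lambda>z. f I + k < f z) at_bot"
    using assms(3) by (simp add: filterlim_at_top_dense)
  then obtain b where b: "\<forall>z\<le>b. f I + k < f z" by (auto simp: eventually_at_bot_linorder)
  obtain w where "w \<in> grid \<theta>" "w \<le> min b I" using grid_point_below[OF assms(1)] by metis
  then have "w \<in> ?W" using b by auto
  moreover have "z \<le> I - \<theta>" if "z \<in> ?W" for z
  proof -
    have "z < I" using that assms(2) by (cases "z = I") auto
    then show ?thesis using grid_less_imp_le_diff[OF assms(1) _ assms(4)] that by auto
  qed
  ultimately have "Sup ?W \<le> I - \<theta>" by (intro cSup_least) auto
  then show ?thesis by simp
qed

lemma argmin_Sup_in:
  fixes h :: "real \<Rightarrow> real"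
  assumes "finite R" "R \<noteq> {}"
  shows "Sup {z \<in> R. h z = Inf (h ` R)} \<in> R"
proof -
  have "Inf (h ` R) \<in> h ` R" using finite_cInf_in[of "h ` R"] assms by simp
  then obtain r where "r \<in> R" "h r = Inf (h ` R)" by force
  then show ?thesis
    using finite_cSup_in[of "{z \<in> R. h z = Inf (h ` R)}"] assms(1) by auto
qed

lemma step_reorder_le:
  assumes "0 < \<theta>" "0 \<le> K t"
    and "filterlim (C t) at_top at_top" "filterlim (C t) at_top at_bot"
    and step: "step C K \<alpha> \<theta> F t st = (H, S, s, Ib)"
  shows "H s \<le> H S + K t"
proof -
  obtain H' S' s' Ib' where st: "st = (H', S', s', Ib')" by (metis prod_cases4)
  define I where "I = Sup {z \<in> grid \<theta>. z < min (Ib' - \<theta>) (Cm C t)}"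
  define R where "R = {z \<in> grid \<theta>. I \<le> z \<and> z \<le> SU C K \<theta> t}"
  have S: "S = Sup {z \<in> R. H z = Inf (H ` R)}"
    and Ib: "Ib = Sup {z \<in> grid \<theta>. z \<le> I \<and> C t z > C t I + K t} + \<theta>"
    and s: "s = (if K t = 0 then S else Inf {z \<in> grid \<theta>. Ib \<le> z \<and> z \<le> S \<and> H z \<le> H S + K t})"
    using step unfolding st step_def I_def R_def by (auto simp: Let_def)
  have "I \<in> grid \<theta> \<and> I < min (Ib' - \<theta>) (Cm C t)"
    unfolding I_def by (rule Sup_grid_less[OF assms(1)])
  then have I: "I \<in> grid \<theta>" "I < Cm C t" by auto
  then have "I \<in> R" using Cm_le_SU[of \<theta> C t K, OF assms(1,3)] by (simp add: R_def)
  moreover have "finite R" unfolding R_def by (rule finite_grid_interval[OF assms(1)])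
  ultimately have "S \<in> R" unfolding S by (intro argmin_Sup_in) auto
  then have "S \<in> grid \<theta>" "Ib \<le> S"
    using Sup_grid_exceeding_lt[OF assms(1,2,4) I(1)] Ib by (auto simp: R_def)
  define A where "A = {z \<in> grid \<theta>. Ib \<le> z \<and> z \<le> S \<and> H z \<le> H S + K t}"
  have "S \<in> A" using \<open>S \<in> grid \<theta>\<close> \<open>Ib \<le> S\<close> assms(2) by (simp add: A_def)
  moreover have "finite A"
    unfolding A_def by (rule finite_subset[OF _ finite_grid_interval[OF assms(1), of Ib S]]) auto
  ultimately have "Inf A \<in> A" by (intro finite_cInf_in) auto
  then show ?thesis using s assms(2) unfolding A_def[symmetric] by (cases "K t = 0") (auto simp: A_def)
qed

lemma sLast_spec:
  assumes "continuous_on UNIV (C (T - 1))" "filterlim (C (T - 1)) at_top at_bot" "0 \<le> K (T - 1)"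
  shows "sLast C K T \<le> Cm C (T - 1) \<and> C (T - 1) (sLast C K T) = C (T - 1) (Cm C (T - 1)) + K (T - 1)"
  unfolding sLast_def
proof (rule someI_ex)
  let ?f = "C (T - 1)" and ?m = "Cm C (T - 1)"
  have "eventually (\<lambda>z. ?f ?m + K (T - 1) < ?f z) at_bot"
    using assms(2) by (simp add: filterlim_at_top_dense)
  then obtain b where b: "\<forall>z\<le>b. ?f ?m + K (T - 1) < ?f z" by (auto simp: eventually_at_bot_linorder)
  have "?f ?m + K (T - 1) < ?f (min b ?m)" using b by simp
  then have "?f ?m \<le> ?f ?m + K (T - 1)" "?f ?m + K (T - 1) \<le> ?f (min b ?m)"
    using assms(3) by linarith+
  moreover have "continuous_on {min b ?m..?m} ?f" using assms(1) by (rule continuous_on_subset) simp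
  ultimately have "\<exists>s. min b ?m \<le> s \<and> s \<le> ?m \<and> ?f s = ?f ?m + K (T - 1)"
    by (intro IVT2') simp_all
  then show "\<exists>s. s \<le> ?m \<and> ?f s = ?f ?m + K (T - 1)" by blast
qed

section \<open>One step of the recursion\<close>

lemma fprob_nonneg:
  assumes "mono (F t)" "0 < \<theta>"
  shows "0 \<le> fprob \<theta> F t n"
  using assms by (simp add: fprob_def zg_def algebra_simps mono_def)

lemma summable_fprob:
  assumes "mono (F t)" "bdd_above (range (F t))" "0 < \<theta>"
  shows "summable (\<lambda>k. fprob \<theta> F t (int k - 1))"
proof -
  define g where "g k = F t (zg \<theta> (int k - 1))" for k
  have "incseq g" using assms(1,3) by (simp add: incseq_Suc_iff g_def zg_def mono_def)
  moreover have "bdd_above (range g)"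
    using assms(2) unfolding g_def by (auto simp: bdd_above_def)
  ultimately have "summable (\<lambda>k. g (Suc k) - g k)"
    by (intro telescope_summable[OF LIMSEQ_incseq_SUP])
  then show ?thesis by (simp add: g_def fprob_def)
qed

lemma eventually_grid_shift_less:
  assumes "0 < \<theta>"
  shows "eventually (\<lambda>k. y - zg \<theta> (int k - 1) < s) sequentially"
proof -
  have "y - zg \<theta> (int k - 1) < s" if "nat \<lceil>(y - s)/\<theta>\<rceil> + 2 \<le> k" for k
  proof -
    have "(y - s)/\<theta> < real_of_int (int k - 1)" using that by linarith
    then show ?thesis using assms by (simp add: pos_divide_less_eq zg_def)
  qed
  then show ?thesis unfolding eventually_sequentially by blast
qed

lemma the_grid_index:
  assumes "0 < \<theta>"
  shows "(THE n::int. zg \<theta> (n - 1) \<le> u \<and> u < zg \<theta> n) = \<lfloor>u/\<theta>\<rfloor> + 1"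
proof (rule the_equality)
  show "zg \<theta> (\<lfloor>u/\<theta>\<rfloor> + 1 - 1) \<le> u \<and> u < zg \<theta> (\<lfloor>u/\<theta>\<rfloor> + 1)"
    using assms by (simp add: zg_def pos_le_divide_eq[symmetric] pos_divide_less_eq[symmetric])
  fix m assume "zg \<theta> (m - 1) \<le> u \<and> u < zg \<theta> m"
  then have "of_int (m - 1) \<le> u/\<theta>" "u/\<theta> < of_int (m - 1) + 1"
    using assms by (auto simp: zg_def pos_le_divide_eq pos_divide_less_eq)
  then have "\<lfloor>u/\<theta>\<rfloor> = m - 1" by (intro floor_unique) simp_all
  then show "m = \<lfloor>u/\<theta>\<rfloor> + 1" by simp
qed

text \<open>Since the estimate of the next period vanishes below its reorder point, the finite sum
  in the definition of psi is the full series over all demand levels.\<close>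

lemma psi_step_eq_suminf:
  assumes "0 < \<theta>" and vanish: "\<And>y. y < s' \<Longrightarrow> phi' x y = 0"
  shows "psi_step \<gamma> \<alpha> \<theta> F s' t phi' x y
    = \<gamma> t * x + \<alpha> * (\<Sum>k. phi' x (y - zg \<theta> (int k - 1)) * fprob \<theta> F t (int k - 1))"
proof (cases "y < s' - \<theta>")
  case True
  have "y - zg \<theta> (int k - 1) < s'" for k
    using True assms(1) mult_right_mono[of "-1" "real k - 1" \<theta>] by (simp add: zg_def)
  then show ?thesis using True by (simp add: psi_step_def vanish)
next
  case False
  define n where "n = \<lfloor>(y - s')/\<theta>\<rfloor> + 1"
  have "-1 \<le> (y - s')/\<theta>" using False assms(1) by (simp add: pos_le_divide_eq)
  then have "-1 \<le> \<lfloor>(y - s')/\<theta>\<rfloor>" by (subst le_floor_iff) simp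
  then have n: "0 \<le> n" by (simp add: n_def)
  have "phi' x (y - zg \<theta> (int k - 1)) = 0" if "k \<notin> {..<nat (n + 1)}" for k
  proof -
    have "\<lfloor>(y - s')/\<theta>\<rfloor> < int k - 1" using that n unfolding n_def by auto
    then have "(y - s')/\<theta> < real_of_int (int k - 1)" by (rule floor_less_iff[THEN iffD1])
    then show ?thesis using assms(1) by (intro vanish) (simp add: zg_def pos_divide_less_eq)
  qed
  then have "(\<Sum>k. phi' x (y - zg \<theta> (int k - 1)) * fprob \<theta> F t (int k - 1))
      = (\<Sum>k<nat (n + 1). phi' x (y - zg \<theta> (int k - 1)) * fprob \<theta> F t (int k - 1))"
    by (intro suminf_finite) auto
  also have "\<dots> = (\<Sum>m\<in>{-1..n - 1}. phi' x (y - zg \<theta> m) * fprob \<theta> F t m)"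
    by (rule sum.reindex_bij_witness[of _ "\<lambda>m. nat (m + 1)" "\<lambda>k. int k - 1"]) (use n in auto)
  finally show ?thesis
    using False the_grid_index[OF assms(1), of "y - s'"] by (simp add: psi_step_def n_def)
qed

lemma recursion_diff_le_psi_step:
  fixes V' :: "real \<Rightarrow> real" and phi' :: "real \<Rightarrow> real \<Rightarrow> real" and Ct :: "real \<Rightarrow> real"
  assumes "0 < \<theta>" "0 \<le> \<alpha>"
    and fprob: "\<And>n. 0 \<le> fprob \<theta> F t n" "summable (\<lambda>k. fprob \<theta> F t (int k - 1))"
    and V'_const: "\<And>y. y < s' \<Longrightarrow> V' y = c"
    and V'_diff: "\<And>x x'. x' \<le> x \<Longrightarrow> V' x - V' x' \<le> phi' (x - x') x"
    and phi'_vanish: "\<And>x y. y < s' \<Longrightarrow> phi' x y = 0"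
    and Ct_diff: "Ct x - Ct x' \<le> \<gamma> t * (x - x')"
    and "x' \<le> x"
  shows "(Ct x + \<alpha> * (\<Sum>k. V' (x - zg \<theta> (int k - 1)) * fprob \<theta> F t (int k - 1)))
       - (Ct x' + \<alpha> * (\<Sum>k. V' (x' - zg \<theta> (int k - 1)) * fprob \<theta> F t (int k - 1)))
       \<le> psi_step \<gamma> \<alpha> \<theta> F s' t phi' (x - x') x"
proof -
  define f where "f k = fprob \<theta> F t (int k - 1)" for k
  define a where "a y k = V' (y - zg \<theta> (int k - 1)) * f k" for y k
  define d where "d k = phi' (x - x') (x - zg \<theta> (int k - 1)) * f k" for k
  have ev: "eventually (\<lambda>k. a y k = c * f k) sequentially" for y
    using eventually_grid_shift_less[OF assms(1), of y s'] by eventually_elim (simp add: a_def V'_const)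
  have sa: "summable (a y)" for y
    using summable_cong[OF ev[of y]] summable_mult[OF fprob(2), of c] by (simp add: f_def)
  have "eventually (\<lambda>k. d k = 0) sequentially"
    using eventually_grid_shift_less[OF assms(1), of x s'] by eventually_elim (simp add: d_def phi'_vanish)
  then have sd: "summable d" using summable_cong[of d "\<lambda>_. 0"] by simp
  have "a x k - a x' k \<le> d k" for k
    using mult_right_mono[OF V'_diff[of "x' - zg \<theta> (int k - 1)" "x - zg \<theta> (int k - 1)"] fprob(1)]
      \<open>x' \<le> x\<close> by (simp add: a_def d_def f_def left_diff_distrib)
  then have "suminf (a x) - suminf (a x') \<le> suminf d"
    using suminf_diff[OF sa sa] suminf_le[OF _ summable_diff[OF sa sa] sd] by metis
  then have "(Ct x - Ct x') + \<alpha> * (suminf (a x) - suminf (a x')) \<le> \<gamma> t * (x - x') + \<alpha> * suminf d"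
    using Ct_diff assms(2) by (intro add_mono mult_left_mono)
  also have "\<dots> = psi_step \<gamma> \<alpha> \<theta> F s' t phi' (x - x') x"
    unfolding d_def f_def by (rule psi_step_eq_suminf[OF assms(1), symmetric]) (rule phi'_vanish)
  finally show ?thesis by (simp add: a_def[abs_def] f_def right_diff_distrib)
qed

lemma Vof_diff_le_phi_of:
  assumes "\<And>x x'. x' \<le> x \<Longrightarrow> H x - H x' \<le> ps (x - x') x"
    and "H s \<le> H S + k" and "x' \<le> x"
  shows "Vof H S s k x - Vof H S s k x' \<le> phi_of s ps (x - x') x"
  using assms(1)[of s x] assms(1)[OF assms(3)] assms(2,3)
  by (auto simp: Vof_def phi_of_def)

section \<open>Unfolding the backward recursion\<close>

lemma stages_pred:
  assumes "Suc t < T"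
  shows "stages C K \<alpha> \<theta> F T (T - 1 - t) = step C K \<alpha> \<theta> F t (stages C K \<alpha> \<theta> F T (T - 1 - Suc t))"
proof -
  have "T - 1 - t = Suc (T - 1 - Suc t)" "T - 2 - (T - 1 - Suc t) = t" using assms by auto
  then show ?thesis by simp
qed

locale grid_policy =
  fixes C :: "nat \<Rightarrow> real \<Rightarrow> real" and K :: "nat \<Rightarrow> real" and \<alpha> \<theta> :: real
    and F :: "nat \<Rightarrow> real \<Rightarrow> real" and T :: nat and \<gamma> :: "nat \<Rightarrow> real"
  assumes theta_pos: "0 < \<theta>" and alpha_nonneg: "0 \<le> \<alpha>"
    and K_nonneg: "\<And>t. t < T \<Longrightarrow> 0 \<le> K t"
    and F_mono: "\<And>t. t < T \<Longrightarrow> mono (F t)"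
    and F_bounded: "\<And>t. t < T \<Longrightarrow> bdd_above (range (F t))"
    and C_at_top: "\<And>t. t < T \<Longrightarrow> filterlim (C t) at_top at_top"
    and C_at_bot: "\<And>t. t < T \<Longrightarrow> filterlim (C t) at_top at_bot"
    and gamma_nonneg: "\<And>t. t < T \<Longrightarrow> 0 \<le> \<gamma> t"
    and C_lipschitz: "\<And>t x y. t < T \<Longrightarrow> \<bar>C t x - C t y\<bar> \<le> \<gamma> t * \<bar>x - y\<bar>"
begin

abbreviation "H \<equiv> Hfun C K \<alpha> \<theta> F T"
abbreviation "V \<equiv> Vfun C K \<alpha> \<theta> F T"
abbreviation "S \<equiv> Sfun C K \<alpha> \<theta> F T"
abbreviation "s \<equiv> sfun C K \<alpha> \<theta> F T"
abbreviation "psi \<equiv> psifun C K \<alpha> \<theta> F T \<gamma>"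
abbreviation "phi \<equiv> phifun C K \<alpha> \<theta> F T \<gamma>"

lemma C_diff_le: "t < T \<Longrightarrow> x' \<le> x \<Longrightarrow> C t x - C t x' \<le> \<gamma> t * (x - x')"
  using C_lipschitz[of t x x'] by simp

lemma V_eq: "V t = Vof (H t) (S t) (s t) (K t)"
  by (simp add: Vfun_def[abs_def])

lemma H_pred:
  assumes "Suc t < T"
  shows "H t = (\<lambda>y. C t y + \<alpha> * (\<Sum>k. V (Suc t) (y - zg \<theta> (int k - 1)) * fprob \<theta> F t (int k - 1)))"
  using stages_pred[OF assms, of C K \<alpha> \<theta> F]
  by (cases "stages C K \<alpha> \<theta> F T (T - 1 - Suc t)")
     (simp add: Hfun_def Sfun_def sfun_def Vfun_def[abs_def] step_def Let_def split: prod.splits)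

lemma psi_pred:
  assumes "Suc t < T"
  shows "psi t = psi_step \<gamma> \<alpha> \<theta> F (s (Suc t)) t (phi (Suc t))"
proof -
  have "t \<noteq> T - 1" using assms by simp
  then show ?thesis by (simp add: psifun_def)
qed

lemma phi_pred:
  assumes "Suc t < T"
  shows "phi t = phi_of (s t) (psi t)"
proof -
  have "T - 1 - t = Suc (T - 1 - Suc t)" "T - 2 - (T - 1 - Suc t) = t" "T - 1 - (T - 1 - Suc t) = Suc t"
    using assms by auto
  then show ?thesis using psi_pred[OF assms] by (simp add: phifun_def)
qed

lemma phi_vanish:
  assumes "t < T" "y < s t"
  shows "phi t x y = 0"
proof (cases "Suc t < T")
  case True then show ?thesis using assms(2) by (simp add: phi_pred phi_of_def)
next
  case False
  then have "t = T - 1" using assms(1) by simp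
  then show ?thesis using assms(2) by (simp add: phifun_def)
qed

lemma phi_of_psi_le_phi:
  assumes "t < T"
  shows "phi_of (s t) (psi t) x y \<le> phi t x y"
proof (cases "Suc t < T")
  case True then show ?thesis by (simp add: phi_pred)
next
  case False
  then have "t = T - 1" using assms by simp
  then show ?thesis
    using gamma_nonneg[OF assms] by (auto simp: phi_of_def phifun_def psifun_def intro: mult_left_mono)
qed

lemma H_reorder_le:
  assumes "t < T"
  shows "H t (s t) \<le> H t (S t) + K t"
proof (cases "Suc t < T")
  case True
  obtain H' S' s' Ib' where
    step: "step C K \<alpha> \<theta> F t (stages C K \<alpha> \<theta> F T (T - 1 - Suc t)) = (H', S', s', Ib')"
    by (metis prod_cases4)
  then have "stages C K \<alpha> \<theta> F T (T - 1 - t) = (H', S', s', Ib')" by (simp only: stages_pred[OF True])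
  then have "H t = H'" "S t = S'" "s t = s'" by (simp_all add: Hfun_def Sfun_def sfun_def)
  then show ?thesis
    using step_reorder_le[where C = C and K = K and t = t,
        OF theta_pos K_nonneg[OF assms] C_at_top[OF assms] C_at_bot[OF assms] step]
    by simp
next
  case False
  then have t: "t = T - 1" using assms by simp
  have "continuous_on UNIV (C t)"
    using C_lipschitz[OF assms] gamma_nonneg[OF assms]
    by (intro lipschitz_on_continuous_on[of "\<gamma> t"]) (auto simp: lipschitz_on_def dist_real_def)
  then show ?thesis
    using sLast_spec[of C T K] C_at_bot[OF assms] K_nonneg[OF assms]
    by (simp add: t Hfun_def Sfun_def sfun_def)
qed

lemma H_diff_le_psi:
  assumes "t < T" "x' \<le> x"
    and V_next: "Suc t < T \<Longrightarrow> \<forall>x x'. x' \<le> x \<longrightarrow> V (Suc t) x - V (Suc t) x' \<le> phi (Suc t) (x - x') x"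
  shows "H t x - H t x' \<le> psi t (x - x') x"
proof (cases "Suc t < T")
  case True
  show ?thesis
    unfolding H_pred[OF True] psi_pred[OF True]
  proof (rule recursion_diff_le_psi_step[where Ct = "C t" and V' = "V (Suc t)" and phi' = "phi (Suc t)",
        OF theta_pos alpha_nonneg])
    show "\<And>n. 0 \<le> fprob \<theta> F t n" using fprob_nonneg[of F t, OF F_mono[OF assms(1)] theta_pos] .
    show "summable (\<lambda>k. fprob \<theta> F t (int k - 1))"
      using summable_fprob[of F t, OF F_mono[OF assms(1)] F_bounded[OF assms(1)] theta_pos] .
    show "\<And>y. y < s (Suc t) \<Longrightarrow> V (Suc t) y = H (Suc t) (S (Suc t)) + K (Suc t)"
      by (simp add: V_eq Vof_def)
    show "\<And>x y. y < s (Suc t) \<Longrightarrow> phi (Suc t) x y = 0" using phi_vanish[OF True] .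
    show "\<And>x x'. x' \<le> x \<Longrightarrow> V (Suc t) x - V (Suc t) x' \<le> phi (Suc t) (x - x') x"
      using V_next[OF True] by blast
    show "C t x - C t x' \<le> \<gamma> t * (x - x')" using C_diff_le[OF assms(1,2)] .
  qed (rule assms(2))
next
  case False
  then have "t = T - 1" using assms(1) by simp
  then show ?thesis using C_diff_le[OF assms(1,2)] by (simp add: Hfun_def psifun_def)
qed

lemma V_diff_le_phi:
  assumes "t < T" "x' \<le> x"
    and H_diff: "\<And>x x'. x' \<le> x \<Longrightarrow> H t x - H t x' \<le> psi t (x - x') x"
  shows "V t x - V t x' \<le> phi t (x - x') x"
  using Vof_diff_le_phi_of[OF H_diff H_reorder_le[OF assms(1)] assms(2)]
    phi_of_psi_le_phi[OF assms(1)] unfolding V_eq by (meson order_trans)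

lemma diff_bounds:
  assumes "t < T"
  shows "\<forall>x x'. x' \<le> x \<longrightarrow> H t x - H t x' \<le> psi t (x - x') x \<and> V t x - V t x' \<le> phi t (x - x') x"
proof -
  have "t \<le> T - 1" using assms by simp
  then show ?thesis
  proof (induction t rule: inc_induct)
    case base
    have t: "T - 1 < T" "\<not> Suc (T - 1) < T" using assms by auto
    have H: "H (T - 1) x - H (T - 1) x' \<le> psi (T - 1) (x - x') x" if "x' \<le> x" for x x'
      using H_diff_le_psi[OF t(1) that] t(2) by blast
    show ?case using H V_diff_le_phi[OF t(1) _ H] by blast
  next
    case (step n)
    have n: "n < T" using step.hyps by simp
    have H: "H n x - H n x' \<le> psi n (x - x') x" if "x' \<le> x" for x x'
      using H_diff_le_psi[OF n that] step.IH by blast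
    show ?case using H V_diff_le_phi[OF n _ H] by blast
  qed
qed

end

theorem lemma4p3:
  fixes T :: nat and \<alpha> \<theta> :: real and c K \<gamma> :: "nat \<Rightarrow> real"
    and G :: "nat \<Rightarrow> real \<Rightarrow> real" and M :: "nat \<Rightarrow> real measure"
  defines "C \<equiv> Ccost \<alpha> c G M"
      and "F \<equiv> (\<lambda>t x. cdf (M t) x)"
  assumes "2 \<le> T" and "0 < \<alpha>" and "\<alpha> \<le> 1" and "0 < \<theta>"
    and "\<forall>t<T. 0 \<le> K t"
    and "\<forall>t<T. real_distribution (M t)"
    and "\<forall>t<T. AE d in M t. 0 \<le> d"
    and "\<forall>t<T. integrable (M t) (\<lambda>d. d)"
    and "\<forall>t<T. convex_on UNIV (C t)"
    and "\<forall>t<T. filterlim (C t) at_top at_top \<and> filterlim (C t) at_top at_bot"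
    and "\<forall>t. t + 2 \<le> T \<longrightarrow> \<alpha> * K (Suc t) \<le> K t"
    and "\<forall>t<T. 0 \<le> \<gamma> t \<and> (\<forall>x y. \<bar>C t x - C t y\<bar> \<le> \<gamma> t * \<bar>x - y\<bar>)"
  shows "\<forall>t<T. \<forall>x x'. x' \<le> x \<longrightarrow>
           Hfun C K \<alpha> \<theta> F T t x - Hfun C K \<alpha> \<theta> F T t x' \<le> psifun C K \<alpha> \<theta> F T \<gamma> t (x - x') x
         \<and> Vfun C K \<alpha> \<theta> F T t x - Vfun C K \<alpha> \<theta> F T t x' \<le> phifun C K \<alpha> \<theta> F T \<gamma> t (x - x') x"
proof -
  have "mono (F t)" "bdd_above (range (F t))" if "t < T" for t
    using real_distribution.cdf_bounded_prob assms(8) that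
      finite_borel_measure.cdf_nondecreasing[OF real_distribution.finite_borel_measure_M]
    by (auto simp: F_def mono_def bdd_above_def)
  then interpret grid_policy C K \<alpha> \<theta> F T \<gamma>
    using assms(4,6,7,12,14) by unfold_locales auto
  show ?thesis using diff_bounds by blast
qed

end
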